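(* Let $n\ge2$, let $\alpha_i,\beta_i>0$ ($i=1,\dots,n$) satisfy $\sum_i\alpha_i=\sum_i\beta_i=1$, let $C$ be a convex subset of a real linear space, let $f:C\to\mathbb R$ be strictly convex, and let $x_1,\dots,x_n\in C$. Set $A:=\{i: \alpha_i/\beta_i=\min_k\alpha_k/\beta_k\}$ and $B:=\{i:\alpha_i/\beta_i=\max_k\alpha_k/\beta_k\}$. Then the inequalities $$\min_{k}\left\{\frac{\alpha_k}{\beta_k}\right\}\left(\sum_{i=1}^n\beta_i f(x_i)-f\Big(\sum_{i=1}^n\beta_i x_i\Big)\right)\le \sum_{i=1}^n\alpha_i f(x_i)-f\Big(\sum_{i=1}^n\alpha_i x_i\Big)\le \max_{k}\left\{\frac{\alpha_k}{\beta_k}\right\}\left(\sum_{i=1}^n\beta_i f(x_i)-f\Big(\sum_{i=1}^n\beta_i x_i\Big)\right)$$ hold; equality holds in the left inequality if and only if for every $j\in\{1,\dots,n\}\setminus A$, $$x_j=\sum_{i\in A}\frac{\alpha_i}{\sum_{l\in A}\alpha_l}x_i=\sum_{i=1}^n\alpha_i x_i,$$ or equivalently $x_j=\sum_{i\in A}\frac{\beta_i}{\sum_{l\in A}\beta_l}x_i=\sum_{i=1}^n\beta_i x_i$; and equality holds in the right inequality if and only if for every $j\in\{1,\dots,n\}\setminus B$, $$x_j=\sum_{i\in B}\frac{\alpha_i}{\sum_{l\in B}\alpha_l}x_i=\sum_{i=1}^n\alpha_i x_i,$$ or equivalently $x_j=\sum_{i\in B}\frac{\beta_i}{\sum_{l\in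 B}\beta_l}x_i=\sum_{i=1}^n\beta_i x_i$. *)

theory Defs
  imports "HOL-Analysis.Analysis"
begin

definition strictly_convex_on :: "'a::real_vector set \<Rightarrow> ('a \<Rightarrow> real) \<Rightarrow> bool" where
  "strictly_convex_on C f \<longleftrightarrow> convex C \<and>
     (\<forall>x\<in>C. \<forall>y\<in>C. x \<noteq> y \<longrightarrow> (\<forall>t::real. 0 < t \<and> t < 1 \<longrightarrow>
        f ((1 - t) *\<^sub>R x + t *\<^sub>R y) < (1 - t) * f x + t * f y))"

end

theory Submission
  imports Defs
begin

(*
  The key observation: if k > 0 and k \<beta>_i \<le> \<alpha>_i for all i, then
      J(\<alpha>) - k J(\<beta>) = (k f(y\<^sub>\<beta>) + \<Sum> (\<alpha>_i - k\<beta>_i) f(x_i)) - f(y\<^sub>\<alpha>),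
  which is the Jensen gap of the point y\<^sub>\<beta> = \<Sum> \<beta>_i x_i together with the x_i, taken
  with the nonnegative weights k and \<alpha>_i - k\<beta>_i (their barycentre is y\<^sub>\<alpha>).  Hence
  k J(\<beta>) \<le> J(\<alpha>), with equality, by strict Jensen, iff y\<^sub>\<beta> = y\<^sub>\<alpha> and x_j = y\<^sub>\<alpha> for
  every j with k\<beta>_j < \<alpha>_j.  Taking k = m gives the left inequality; the right one is
  the same statement with \<alpha> and \<beta> exchanged and k = 1/M.
*)

section \<open>Jensen's inequality for strictly convex functions\<close>

lemma strictly_convex_on_imp_convex_on:
  assumes "strictly_convex_on C f"
  shows "convex_on C f"
proof (rule convex_onI)
  show "convex C" using assms unfolding strictly_convex_on_def by blast
next
  fix t :: real and x y assume t: "0 < t" "t < 1" and xy: "x \<in> C" "y \<in> C"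
  show "f ((1 - t) *\<^sub>R x + t *\<^sub>R y) \<le> (1 - t) * f x + t * f y"
  proof (cases "x = y")
    case True
    then show ?thesis by (simp add: algebra_simps flip: scaleR_add_left)
  next
    case False
    then show ?thesis using assms t xy unfolding strictly_convex_on_def by (meson less_imp_le)
  qed
qed

text \<open>If a point carrying positive weight differs from the barycentre, Jensen's inequality
  is strict: split that point off and apply strict convexity to it and the barycentre of
  the remaining points.\<close>

lemma jensen_strict_at_point:
  fixes w :: "'i \<Rightarrow> real" and z :: "'i \<Rightarrow> 'a::real_vector"
  assumes sc: "strictly_convex_on C f" and fin: "finite I"
    and w_nonneg: "\<forall>i\<in>I. w i \<ge> 0" and w_sum: "sum w I = 1" and zC: "\<forall>i\<in>I. z i \<in> C"
    and i: "i \<in> I" "w i > 0" and z_ne: "z i \<noteq> (\<Sum>k\<in>I. w k *\<^sub>R z k)"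
  shows "f (\<Sum>k\<in>I. w k *\<^sub>R z k) < (\<Sum>k\<in>I. w k * f (z k))"
proof -
  define u where "u = w i"
  define R where "R = I - {i}"
  define p where "p = (\<Sum>k\<in>I. w k *\<^sub>R z k)"
  have finR: "finite R" using fin by (simp add: R_def)
  have sumR: "sum w R = 1 - u"
    using sum.remove[OF fin i(1), of w] w_sum by (simp add: u_def R_def)
  have p_split: "p = u *\<^sub>R z i + (\<Sum>k\<in>R. w k *\<^sub>R z k)"
    unfolding p_def u_def R_def using sum.remove[OF fin i(1)] .
  have f_split: "(\<Sum>k\<in>I. w k * f (z k)) = u * f (z i) + (\<Sum>k\<in>R. w k * f (z k))"
    unfolding u_def R_def using sum.remove[OF fin i(1)] .
  have u_less: "u < 1"
  proof (rule ccontr)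
    assume "\<not> u < 1"
    then have "sum w R = 0" using sumR sum_nonneg[of R w] w_nonneg by (force simp: R_def)
    then have "\<forall>k\<in>R. w k = 0" using sum_nonneg_eq_0_iff[OF finR] w_nonneg by (auto simp: R_def)
    then have "p = z i" using p_split \<open>sum w R = 0\<close> sumR by simp
    then show False using z_ne by (simp add: p_def)
  qed
  have u_pos: "0 < u" using i(2) by (simp add: u_def)
  define v where "v k = w k / (1 - u)" for k
  define q where "q = (\<Sum>k\<in>R. v k *\<^sub>R z k)"
  have v_sum: "sum v R = 1" using sumR u_less by (simp add: v_def flip: sum_divide_distrib)
  have v_nonneg: "\<And>k. k \<in> R \<Longrightarrow> v k \<ge> 0" using w_nonneg u_less by (simp add: v_def R_def)
  have zR: "\<And>k. k \<in> R \<Longrightarrow> z k \<in> C" using zC by (simp add: R_def)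
  have qC: "q \<in> C"
    unfolding q_def using sc v_sum v_nonneg zR
    by (intro convex_sum[OF finR]) (auto simp: strictly_convex_on_def)
  have f_q: "f q \<le> (\<Sum>k\<in>R. v k * f (z k))"
    unfolding q_def using v_sum
    by (intro convex_on_sum[OF finR _ strictly_convex_on_imp_convex_on[OF sc] v_sum v_nonneg zR])
       auto
  have p_q: "p = (1 - u) *\<^sub>R q + u *\<^sub>R z i"
    using p_split u_less by (simp add: q_def v_def scaleR_sum_right)
  have q_ne: "q \<noteq> z i"
  proof
    assume "q = z i"
    then have "p = z i" using p_q by (simp flip: scaleR_add_left)
    then show False using z_ne by (simp add: p_def)
  qed
  have "f p < (1 - u) * f q + u * f (z i)"
    using sc q_ne qC zC i(1) u_pos u_less unfolding strictly_convex_on_def p_q by blast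
  also have "\<dots> \<le> (1 - u) * (\<Sum>k\<in>R. v k * f (z k)) + u * f (z i)"
    using f_q u_less by (simp add: mult_left_mono)
  also have "(1 - u) * (\<Sum>k\<in>R. v k * f (z k)) = (\<Sum>k\<in>R. w k * f (z k))"
    using u_less by (simp add: v_def sum_distrib_left)
  finally show ?thesis using f_split by (simp add: p_def)
qed

lemma jensen_strictly_convex:
  fixes w :: "'i \<Rightarrow> real" and z :: "'i \<Rightarrow> 'a::real_vector"
  assumes sc: "strictly_convex_on C f" and fin: "finite I"
    and w_nonneg: "\<forall>i\<in>I. w i \<ge> 0" and w_sum: "sum w I = 1" and zC: "\<forall>i\<in>I. z i \<in> C"
  shows "f (\<Sum>i\<in>I. w i *\<^sub>R z i) \<le> (\<Sum>i\<in>I. w i * f (z i))"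
    and "f (\<Sum>i\<in>I. w i *\<^sub>R z i) = (\<Sum>i\<in>I. w i * f (z i)) \<longleftrightarrow>
          (\<forall>i\<in>I. w i > 0 \<longrightarrow> z i = (\<Sum>k\<in>I. w k *\<^sub>R z k))"
proof -
  have "I \<noteq> {}" using w_sum by auto
  then show "f (\<Sum>i\<in>I. w i *\<^sub>R z i) \<le> (\<Sum>i\<in>I. w i * f (z i))"
    using convex_on_sum[OF fin _ strictly_convex_on_imp_convex_on[OF sc] w_sum] w_nonneg zC
    by blast
  define p where "p = (\<Sum>k\<in>I. w k *\<^sub>R z k)"
  show "f (\<Sum>i\<in>I. w i *\<^sub>R z i) = (\<Sum>i\<in>I. w i * f (z i)) \<longleftrightarrow> (\<forall>i\<in>I. w i > 0 \<longrightarrow> z i = p)"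
  proof
    assume "f (\<Sum>i\<in>I. w i *\<^sub>R z i) = (\<Sum>i\<in>I. w i * f (z i))"
    then show "\<forall>i\<in>I. w i > 0 \<longrightarrow> z i = p"
      using jensen_strict_at_point[OF sc fin w_nonneg w_sum zC] by (fastforce simp: p_def)
  next
    assume at_p: "\<forall>i\<in>I. w i > 0 \<longrightarrow> z i = p"
    have "\<And>i. i \<in> I \<Longrightarrow> w i * f (z i) = w i * f p"
      using at_p w_nonneg by (metis less_eq_real_def mult_zero_left)
    then have "(\<Sum>i\<in>I. w i * f (z i)) = (\<Sum>i\<in>I. w i * f p)"
      by (rule sum.cong[OF refl])
    also have "\<dots> = (\<Sum>i\<in>I. w i) * f p"
      by (simp add: sum_distrib_right)
    finally show "f (\<Sum>i\<in>I. w i *\<^sub>R z i) = (\<Sum>i\<in>I. w i * f (z i))"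
      using w_sum by (simp add: p_def)
  qed
qed

section \<open>Comparing Jensen gaps of two weight vectors\<close>

definition jensen_gap ::
    "'i set \<Rightarrow> ('i \<Rightarrow> real) \<Rightarrow> ('a::real_vector \<Rightarrow> real) \<Rightarrow> ('i \<Rightarrow> 'a) \<Rightarrow> real" where
  "jensen_gap I w f x = (\<Sum>i\<in>I. w i * f (x i)) - f (\<Sum>i\<in>I. w i *\<^sub>R x i)"

text \<open>If k \<beta> \<le> \<alpha> pointwise, then J(\<alpha>) - k J(\<beta>) is the Jensen gap of the points x i and
  the extra point \<Sum> \<beta>_i x_i with the weights \<alpha>_i - k \<beta>_i and k.\<close>

lemma jensen_gap_scaled_lower_bound:
  fixes \<alpha> \<beta> :: "'i \<Rightarrow> real" and x :: "'i \<Rightarrow> 'a::real_vector"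
  assumes sc: "strictly_convex_on C f" and fin: "finite I"
    and \<alpha>_sum: "sum \<alpha> I = 1" and \<beta>_sum: "sum \<beta> I = 1" and \<beta>_nonneg: "\<forall>i\<in>I. \<beta> i \<ge> 0"
    and k_pos: "k > 0" and dominated: "\<forall>i\<in>I. k * \<beta> i \<le> \<alpha> i" and xC: "\<forall>i\<in>I. x i \<in> C"
  shows "k * jensen_gap I \<beta> f x \<le> jensen_gap I \<alpha> f x"
    and "k * jensen_gap I \<beta> f x = jensen_gap I \<alpha> f x \<longleftrightarrow>
           (\<Sum>i\<in>I. \<beta> i *\<^sub>R x i) = (\<Sum>i\<in>I. \<alpha> i *\<^sub>R x i) \<and>
           (\<forall>j\<in>I. k * \<beta> j < \<alpha> j \<longrightarrow> x j = (\<Sum>i\<in>I. \<alpha> i *\<^sub>R x i))"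
proof -
  let ?y\<alpha> = "\<Sum>i\<in>I. \<alpha> i *\<^sub>R x i" and ?y\<beta> = "\<Sum>i\<in>I. \<beta> i *\<^sub>R x i"
  let ?F\<alpha> = "\<Sum>i\<in>I. \<alpha> i * f (x i)" and ?F\<beta> = "\<Sum>i\<in>I. \<beta> i * f (x i)"
  define J where "J = insert None (Some ` I)"
  define w where "w i = (case i of None \<Rightarrow> k | Some i \<Rightarrow> \<alpha> i - k * \<beta> i)" for i
  define z where "z i = (case i of None \<Rightarrow> ?y\<beta> | Some i \<Rightarrow> x i)" for i
  have sum_J: "sum g J = g None + (\<Sum>i\<in>I. g (Some i))" for g :: "'i option \<Rightarrow> 'b::comm_monoid_add"
    using fin by (simp add: J_def sum.reindex)
  have y\<beta>C: "?y\<beta> \<in> C"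
    using sc \<beta>_sum \<beta>_nonneg xC by (intro convex_sum[OF fin]) (auto simp: strictly_convex_on_def)
  have w_nonneg: "\<forall>i\<in>J. w i \<ge> 0" using k_pos dominated by (auto simp: J_def w_def)
  have w_sum: "sum w J = 1"
    using \<alpha>_sum \<beta>_sum by (simp add: sum_J w_def sum_subtractf flip: sum_distrib_left)
  have zC: "\<forall>i\<in>J. z i \<in> C" using xC y\<beta>C by (auto simp: J_def z_def)
  have bary: "(\<Sum>i\<in>J. w i *\<^sub>R z i) = ?y\<alpha>"
    by (simp add: sum_J w_def z_def algebra_simps sum_subtractf scaleR_sum_right)
  have weighted_values: "(\<Sum>i\<in>J. w i * f (z i)) = k * f ?y\<beta> + ?F\<alpha> - k * ?F\<beta>"
    by (simp add: sum_J w_def z_def algebra_simps sum_subtractf sum_distrib_left)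
  note jensen = jensen_strictly_convex[OF sc _ w_nonneg w_sum zC, unfolded bary weighted_values]
  have gap_diff: "jensen_gap I \<alpha> f x - k * jensen_gap I \<beta> f x = k * f ?y\<beta> + ?F\<alpha> - k * ?F\<beta> - f ?y\<alpha>"
    by (simp add: jensen_gap_def algebra_simps)
  show "k * jensen_gap I \<beta> f x \<le> jensen_gap I \<alpha> f x"
    using jensen(1) fin gap_diff by (simp add: J_def)
  have "(\<forall>i\<in>J. w i > 0 \<longrightarrow> z i = ?y\<alpha>) \<longleftrightarrow>
          ?y\<beta> = ?y\<alpha> \<and> (\<forall>j\<in>I. k * \<beta> j < \<alpha> j \<longrightarrow> x j = ?y\<alpha>)"
    using k_pos by (auto simp: J_def w_def z_def)
  moreover have "k * jensen_gap I \<beta> f x = jensen_gap I \<alpha> f x \<longleftrightarrow>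
      f ?y\<alpha> = k * f ?y\<beta> + ?F\<alpha> - k * ?F\<beta>"
    using gap_diff by argo
  ultimately show "k * jensen_gap I \<beta> f x = jensen_gap I \<alpha> f x \<longleftrightarrow>
      ?y\<beta> = ?y\<alpha> \<and> (\<forall>j\<in>I. k * \<beta> j < \<alpha> j \<longrightarrow> x j = ?y\<alpha>)"
    using jensen(2) fin by (simp add: J_def)
qed

definition barycentre :: "'i set \<Rightarrow> ('i \<Rightarrow> real) \<Rightarrow> ('i \<Rightarrow> 'a::real_vector) \<Rightarrow> 'a" where
  "barycentre A g x = (\<Sum>i\<in>A. (g i / (\<Sum>l\<in>A. g l)) *\<^sub>R x i)"

lemma weighted_mean_eq_iff_barycentre_eq:
  fixes g :: "'i \<Rightarrow> real" and x :: "'i \<Rightarrow> 'a::real_vector"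
  assumes fin: "finite I" and AI: "A \<subseteq> I" and g_sum: "sum g I = 1" and gA_pos: "sum g A > 0"
    and outside: "\<forall>j\<in>I - A. x j = c"
  shows "(\<Sum>i\<in>I. g i *\<^sub>R x i) = c \<longleftrightarrow> barycentre A g x = c"
proof -
  have "sum g (I - A) = 1 - sum g A"
    using sum.subset_diff[OF AI fin, of g] g_sum by linarith
  moreover have "(\<Sum>i\<in>I - A. g i *\<^sub>R x i) = sum g (I - A) *\<^sub>R c"
    using outside by (simp add: scaleR_sum_left)
  ultimately have "(\<Sum>i\<in>I - A. g i *\<^sub>R x i) = (1 - sum g A) *\<^sub>R c"
    by simp
  then have mean: "(\<Sum>i\<in>I. g i *\<^sub>R x i) = (\<Sum>i\<in>A. g i *\<^sub>R x i) + (1 - sum g A) *\<^sub>R c"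
    using sum.subset_diff[OF AI fin, of "\<lambda>i. g i *\<^sub>R x i"] by (simp add: add.commute)
  have bary: "barycentre A g x = (1 / sum g A) *\<^sub>R (\<Sum>i\<in>A. g i *\<^sub>R x i)"
    by (simp add: barycentre_def scaleR_sum_right)
  have "(\<Sum>i\<in>I. g i *\<^sub>R x i) = c \<longleftrightarrow> (\<Sum>i\<in>A. g i *\<^sub>R x i) = sum g A *\<^sub>R c"
    unfolding mean by (auto simp: algebra_simps)
  also have "\<dots> \<longleftrightarrow> barycentre A g x = c"
    using gA_pos by (auto simp: bary)
  finally show ?thesis .
qed

lemma barycentre_proportional:
  assumes "\<forall>i\<in>A. \<alpha> i = k * \<beta> i" and "k \<noteq> 0"
  shows "barycentre A \<alpha> x = barycentre A \<beta> x"
proof -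
  have "sum \<alpha> A = k * sum \<beta> A"
    using assms(1) by (simp add: sum_distrib_left)
  then show ?thesis
    using assms unfolding barycentre_def by (intro sum.cong) auto
qed

lemma equality_condition_via_barycentre:
  fixes \<alpha> \<beta> :: "'i \<Rightarrow> real" and x :: "'i \<Rightarrow> 'a::real_vector"
  assumes fin: "finite I" and AI: "A \<subseteq> I" and A_ne: "A \<noteq> {}"
    and \<alpha>_sum: "sum \<alpha> I = 1" and \<beta>_sum: "sum \<beta> I = 1" and \<beta>_pos: "\<forall>i\<in>A. \<beta> i > 0"
    and k_pos: "k > 0" and proportional: "\<forall>i\<in>A. \<alpha> i = k * \<beta> i"
  defines "y\<alpha> \<equiv> \<Sum>i\<in>I. \<alpha> i *\<^sub>R x i" and "y\<beta> \<equiv> \<Sum>i\<in>I. \<beta> i *\<^sub>R x i"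
  shows "y\<beta> = y\<alpha> \<and> (\<forall>j\<in>I - A. x j = y\<alpha>) \<longleftrightarrow>
           (\<forall>j\<in>I - A. x j = barycentre A \<alpha> x \<and> x j = y\<alpha>)" (is "?E \<longleftrightarrow> ?P\<alpha>")
    and "y\<beta> = y\<alpha> \<and> (\<forall>j\<in>I - A. x j = y\<alpha>) \<longleftrightarrow>
           (\<forall>j\<in>I - A. x j = barycentre A \<beta> x \<and> x j = y\<beta>)" (is "_ \<longleftrightarrow> ?P\<beta>")
proof -
  have "(?E \<longleftrightarrow> ?P\<alpha>) \<and> (?E \<longleftrightarrow> ?P\<beta>)"
  proof (cases "I - A = {}")
    case True
    then have "A = I" using AI by blast
    then have "sum \<alpha> I = k * sum \<beta> I"
      using proportional by (simp add: sum_distrib_left)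
    then have "k = 1" using \<alpha>_sum \<beta>_sum by simp
    then have "\<forall>i\<in>I. \<alpha> i = \<beta> i"
      using proportional \<open>A = I\<close> by simp
    then have "y\<beta> = y\<alpha>" by (simp add: y\<alpha>_def y\<beta>_def)
    then show ?thesis using True by auto
  next
    case False
    then obtain j0 where j0: "j0 \<in> I - A" by blast
    have "sum \<beta> A > 0" using fin AI A_ne \<beta>_pos by (intro sum_pos) (auto intro: finite_subset)
    moreover have "sum \<alpha> A = k * sum \<beta> A"
      using proportional by (simp add: sum_distrib_left)
    ultimately have "sum \<alpha> A > 0" using k_pos by simp
    have same: "barycentre A \<alpha> x = barycentre A \<beta> x"
      using proportional k_pos by (intro barycentre_proportional) auto
    have means: "y\<alpha> = c \<longleftrightarrow> barycentre A \<alpha> x = c" "y\<beta> = c \<longleftrightarrow> barycentre A \<alpha> x = c"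
      if "\<forall>j\<in>I - A. x j = c" for c
      using weighted_mean_eq_iff_barycentre_eq[OF fin AI \<alpha>_sum \<open>sum \<alpha> A > 0\<close> that]
        weighted_mean_eq_iff_barycentre_eq[OF fin AI \<beta>_sum \<open>sum \<beta> A > 0\<close> that] same
      by (simp_all add: y\<alpha>_def y\<beta>_def)
    show ?thesis
    proof (rule conjI; rule iffI)
      assume ?E
      then show ?P\<alpha> using means(1)[of y\<alpha>] by auto
    next
      assume P\<alpha>: ?P\<alpha>
      then have outside: "\<forall>j\<in>I - A. x j = y\<alpha>" by blast
      have "barycentre A \<alpha> x = y\<alpha>" using P\<alpha> j0 by metis
      then show ?E using means(2)[OF outside] outside by simp
    next
      assume ?E
      then have "\<forall>j\<in>I - A. x j = y\<beta>" by simp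
      then show ?P\<beta> using means(2)[of y\<beta>] same by auto
    next
      assume P\<beta>: ?P\<beta>
      then have outside: "\<forall>j\<in>I - A. x j = y\<beta>" by blast
      have "barycentre A \<alpha> x = y\<beta>" using P\<beta> j0 same by metis
      then show ?E using means(1)[OF outside] outside by simp
    qed
  qed
  then show "?E \<longleftrightarrow> ?P\<alpha>" "?E \<longleftrightarrow> ?P\<beta>" by blast+
qed

lemma jensen_gap_ratio_bound:
  fixes \<alpha> \<beta> :: "'i \<Rightarrow> real" and x :: "'i \<Rightarrow> 'a::real_vector"
  assumes sc: "strictly_convex_on C f" and fin: "finite I"
    and \<alpha>_sum: "sum \<alpha> I = 1" and \<beta>_sum: "sum \<beta> I = 1" and \<beta>_pos: "\<forall>i\<in>I. \<beta> i > 0"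
    and k_pos: "k > 0" and dominated: "\<forall>i\<in>I. k * \<beta> i \<le> \<alpha> i"
    and A_eq: "A = {i\<in>I. \<alpha> i = k * \<beta> i}" and A_ne: "A \<noteq> {}" and xC: "\<forall>i\<in>I. x i \<in> C"
  shows "k * jensen_gap I \<beta> f x \<le> jensen_gap I \<alpha> f x"
    and "k * jensen_gap I \<beta> f x = jensen_gap I \<alpha> f x \<longleftrightarrow>
           (\<forall>j\<in>I - A. x j = barycentre A \<alpha> x \<and> x j = (\<Sum>i\<in>I. \<alpha> i *\<^sub>R x i))"
    and "k * jensen_gap I \<beta> f x = jensen_gap I \<alpha> f x \<longleftrightarrow>
           (\<forall>j\<in>I - A. x j = barycentre A \<beta> x \<and> x j = (\<Sum>i\<in>I. \<beta> i *\<^sub>R x i))"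
proof -
  have \<beta>_nonneg: "\<forall>i\<in>I. \<beta> i \<ge> 0" using \<beta>_pos by auto
  note gap = jensen_gap_scaled_lower_bound[OF sc fin \<alpha>_sum \<beta>_sum \<beta>_nonneg k_pos dominated xC]
  show "k * jensen_gap I \<beta> f x \<le> jensen_gap I \<alpha> f x" by (rule gap(1))
  have AI: "A \<subseteq> I" using A_eq by blast
  have "\<forall>i\<in>A. \<alpha> i = k * \<beta> i" using A_eq by blast
  note reform = equality_condition_via_barycentre[OF fin AI A_ne \<alpha>_sum \<beta>_sum _ k_pos this, of x]
  have "j \<in> I - A \<longleftrightarrow> k * \<beta> j < \<alpha> j" if "j \<in> I" for j
    using that dominated A_eq by (auto simp: order_less_le)
  then have "(\<forall>j\<in>I. k * \<beta> j < \<alpha> j \<longrightarrow> x j = (\<Sum>i\<in>I. \<alpha> i *\<^sub>R x i)) \<longleftrightarrow>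
               (\<forall>j\<in>I - A. x j = (\<Sum>i\<in>I. \<alpha> i *\<^sub>R x i))"
    by blast
  then show "k * jensen_gap I \<beta> f x = jensen_gap I \<alpha> f x \<longleftrightarrow>
          (\<forall>j\<in>I - A. x j = barycentre A \<alpha> x \<and> x j = (\<Sum>i\<in>I. \<alpha> i *\<^sub>R x i))"
   and "k * jensen_gap I \<beta> f x = jensen_gap I \<alpha> f x \<longleftrightarrow>
          (\<forall>j\<in>I - A. x j = barycentre A \<beta> x \<and> x j = (\<Sum>i\<in>I. \<beta> i *\<^sub>R x i))"
    using gap(2) reform AI \<beta>_pos by auto
qed

text \<open>The mirror image: an upper ratio bound K attained exactly on B.  It is the previous
  lemma with the weight vectors exchanged and the bound 1 / K.\<close>

lemma jensen_gap_ratio_upper_bound: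
  fixes \<alpha> \<beta> :: "'i \<Rightarrow> real" and x :: "'i \<Rightarrow> 'a::real_vector"
  assumes sc: "strictly_convex_on C f" and fin: "finite I"
    and \<alpha>_sum: "sum \<alpha> I = 1" and \<beta>_sum: "sum \<beta> I = 1" and \<alpha>_pos: "\<forall>i\<in>I. \<alpha> i > 0"
    and K_pos: "K > 0" and dominating: "\<forall>i\<in>I. \<alpha> i \<le> K * \<beta> i"
    and B_eq: "B = {i\<in>I. \<alpha> i = K * \<beta> i}" and B_ne: "B \<noteq> {}" and xC: "\<forall>i\<in>I. x i \<in> C"
  shows "jensen_gap I \<alpha> f x \<le> K * jensen_gap I \<beta> f x"
    and "jensen_gap I \<alpha> f x = K * jensen_gap I \<beta> f x \<longleftrightarrow>
           (\<forall>j\<in>I - B. x j = barycentre B \<alpha> x \<and> x j = (\<Sum>i\<in>I. \<alpha> i *\<^sub>R x i))"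
    and "jensen_gap I \<alpha> f x = K * jensen_gap I \<beta> f x \<longleftrightarrow>
           (\<forall>j\<in>I - B. x j = barycentre B \<beta> x \<and> x j = (\<Sum>i\<in>I. \<beta> i *\<^sub>R x i))"
proof -
  have inv_pos: "1 / K > 0" using K_pos by simp
  have dominated: "\<forall>i\<in>I. (1 / K) * \<alpha> i \<le> \<beta> i"
    using dominating K_pos by (auto simp: field_simps)
  have B_eq': "B = {i\<in>I. \<beta> i = (1 / K) * \<alpha> i}"
    using B_eq K_pos by (auto simp: field_simps)
  note swapped =
    jensen_gap_ratio_bound[OF sc fin \<beta>_sum \<alpha>_sum \<alpha>_pos inv_pos dominated B_eq' B_ne xC]
  have scale: "(1 / K) * jensen_gap I \<alpha> f x \<le> jensen_gap I \<beta> f x \<longleftrightarrow>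
                 jensen_gap I \<alpha> f x \<le> K * jensen_gap I \<beta> f x"
              "(1 / K) * jensen_gap I \<alpha> f x = jensen_gap I \<beta> f x \<longleftrightarrow>
                 jensen_gap I \<alpha> f x = K * jensen_gap I \<beta> f x"
    using K_pos by (auto simp: field_simps)
  show "jensen_gap I \<alpha> f x \<le> K * jensen_gap I \<beta> f x"
   and "jensen_gap I \<alpha> f x = K * jensen_gap I \<beta> f x \<longleftrightarrow>
          (\<forall>j\<in>I - B. x j = barycentre B \<alpha> x \<and> x j = (\<Sum>i\<in>I. \<alpha> i *\<^sub>R x i))"
   and "jensen_gap I \<alpha> f x = K * jensen_gap I \<beta> f x \<longleftrightarrow>
          (\<forall>j\<in>I - B. x j = barycentre B \<beta> x \<and> x j = (\<Sum>i\<in>I. \<beta> i *\<^sub>R x i))"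
    using swapped unfolding scale by simp_all
qed

lemma ratio_level_set:
  fixes \<alpha> \<beta> :: "'i \<Rightarrow> real"
  assumes "\<forall>i\<in>I. \<beta> i > 0"
  shows "{i\<in>I. \<alpha> i / \<beta> i = c} = {i\<in>I. \<alpha> i = c * \<beta> i}"
  using assms by (force simp: field_simps)

lemma min_ratio:
  fixes \<alpha> \<beta> :: "'i \<Rightarrow> real"
  assumes fin: "finite I" and ne: "I \<noteq> {}"
    and \<alpha>_pos: "\<forall>i\<in>I. \<alpha> i > 0" and \<beta>_pos: "\<forall>i\<in>I. \<beta> i > 0"
  defines "m \<equiv> Min ((\<lambda>i. \<alpha> i / \<beta> i) ` I)"
  shows "m > 0" and "\<forall>i\<in>I. m * \<beta> i \<le> \<alpha> i" and "\<exists>i\<in>I. \<alpha> i = m * \<beta> i"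
proof -
  have "m \<in> (\<lambda>i. \<alpha> i / \<beta> i) ` I"
    unfolding m_def using fin ne by (intro Min_in) auto
  then obtain i0 where i0: "i0 \<in> I" "\<alpha> i0 / \<beta> i0 = m" by blast
  show "m > 0" using i0 \<alpha>_pos \<beta>_pos by force
  show "\<exists>i\<in>I. \<alpha> i = m * \<beta> i" using i0 \<beta>_pos by (force simp: divide_eq_eq)
  have "m \<le> \<alpha> i / \<beta> i" if "i \<in> I" for i
    unfolding m_def using fin that by simp
  then show "\<forall>i\<in>I. m * \<beta> i \<le> \<alpha> i" using \<beta>_pos by (simp add: pos_le_divide_eq)
qed

lemma max_ratio:
  fixes \<alpha> \<beta> :: "'i \<Rightarrow> real"
  assumes fin: "finite I" and ne: "I \<noteq> {}"
    and \<alpha>_pos: "\<forall>i\<in>I. \<alpha> i > 0" and \<beta>_pos: "\<forall>i\<in>I. \<beta> i > 0"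
  defines "M \<equiv> Max ((\<lambda>i. \<alpha> i / \<beta> i) ` I)"
  shows "M > 0" and "\<forall>i\<in>I. \<alpha> i \<le> M * \<beta> i" and "\<exists>i\<in>I. \<alpha> i = M * \<beta> i"
proof -
  have "M \<in> (\<lambda>i. \<alpha> i / \<beta> i) ` I"
    unfolding M_def using fin ne by (intro Max_in) auto
  then obtain i0 where i0: "i0 \<in> I" "\<alpha> i0 / \<beta> i0 = M" by blast
  show "M > 0" using i0 \<alpha>_pos \<beta>_pos by force
  show "\<exists>i\<in>I. \<alpha> i = M * \<beta> i" using i0 \<beta>_pos by (force simp: divide_eq_eq)
  have "\<alpha> i / \<beta> i \<le> M" if "i \<in> I" for i
    unfolding M_def using fin that by simp
  then show "\<forall>i\<in>I. \<alpha> i \<le> M * \<beta> i" using \<beta>_pos by (simp add: pos_divide_le_eq)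
qed

theorem proposition2p4:
  fixes n :: nat and \<alpha> \<beta> :: "nat \<Rightarrow> real" and C :: "'a::real_vector set"
    and f :: "'a \<Rightarrow> real" and x :: "nat \<Rightarrow> 'a"
  assumes n2: "n \<ge> 2"
    and apos: "\<forall>i\<in>{1..n}. \<alpha> i > 0" and bpos: "\<forall>i\<in>{1..n}. \<beta> i > 0"
    and asum: "(\<Sum>i=1..n. \<alpha> i) = 1" and bsum: "(\<Sum>i=1..n. \<beta> i) = 1"
    and convC: "convex C" and strict: "strictly_convex_on C f"
    and xC: "\<forall>i\<in>{1..n}. x i \<in> C"
  defines "m \<equiv> Min ((\<lambda>k. \<alpha> k / \<beta> k) ` {1..n})"
    and "M \<equiv> Max ((\<lambda>k. \<alpha> k / \<beta> k) ` {1..n})"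
    and "A \<equiv> {i\<in>{1..n}. \<alpha> i / \<beta> i = Min ((\<lambda>k. \<alpha> k / \<beta> k) ` {1..n})}"
    and "B \<equiv> {i\<in>{1..n}. \<alpha> i / \<beta> i = Max ((\<lambda>k. \<alpha> k / \<beta> k) ` {1..n})}"
    and "J\<alpha> \<equiv> (\<Sum>i=1..n. \<alpha> i * f (x i)) - f (\<Sum>i=1..n. \<alpha> i *\<^sub>R x i)"
    and "J\<beta> \<equiv> (\<Sum>i=1..n. \<beta> i * f (x i)) - f (\<Sum>i=1..n. \<beta> i *\<^sub>R x i)"
  shows "m * J\<beta> \<le> J\<alpha> \<and> J\<alpha> \<le> M * J\<beta>
    \<and> (m * J\<beta> = J\<alpha> \<longleftrightarrow>
         (\<forall>j\<in>{1..n} - A.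
            x j = (\<Sum>i\<in>A. (\<alpha> i / (\<Sum>l\<in>A. \<alpha> l)) *\<^sub>R x i) \<and>
            x j = (\<Sum>i=1..n. \<alpha> i *\<^sub>R x i)))
    \<and> (m * J\<beta> = J\<alpha> \<longleftrightarrow>
         (\<forall>j\<in>{1..n} - A.
            x j = (\<Sum>i\<in>A. (\<beta> i / (\<Sum>l\<in>A. \<beta> l)) *\<^sub>R x i) \<and>
            x j = (\<Sum>i=1..n. \<beta> i *\<^sub>R x i)))
    \<and> (J\<alpha> = M * J\<beta> \<longleftrightarrow>
         (\<forall>j\<in>{1..n} - B.
            x j = (\<Sum>i\<in>B. (\<alpha> i / (\<Sum>l\<in>B. \<alpha> l)) *\<^sub>R x i) \<and>
            x j = (\<Sum>i=1..n. \<alpha> i *\<^sub>R x i)))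
    \<and> (J\<alpha> = M * J\<beta> \<longleftrightarrow>
         (\<forall>j\<in>{1..n} - B.
            x j = (\<Sum>i\<in>B. (\<beta> i / (\<Sum>l\<in>B. \<beta> l)) *\<^sub>R x i) \<and>
            x j = (\<Sum>i=1..n. \<beta> i *\<^sub>R x i)))"
proof -
  have fin: "finite {1..n}" and ne: "{1..n} \<noteq> {}" using n2 by auto
  note m = min_ratio[OF fin ne apos bpos, folded m_def]
  note M = max_ratio[OF fin ne apos bpos, folded M_def]
  have A: "A = {i\<in>{1..n}. \<alpha> i = m * \<beta> i}" and B: "B = {i\<in>{1..n}. \<alpha> i = M * \<beta> i}"
    using ratio_level_set[OF bpos] unfolding A_def B_def m_def M_def by blast+
  have "A \<noteq> {}" and "B \<noteq> {}" using m(3) M(3) unfolding A B by auto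
  note lower = jensen_gap_ratio_bound[OF strict fin asum bsum bpos m(1,2) A \<open>A \<noteq> {}\<close> xC]
  note upper = jensen_gap_ratio_upper_bound[OF strict fin asum bsum apos M(1,2) B \<open>B \<noteq> {}\<close> xC]
  have "J\<alpha> = jensen_gap {1..n} \<alpha> f x" and "J\<beta> = jensen_gap {1..n} \<beta> f x"
    unfolding J\<alpha>_def J\<beta>_def jensen_gap_def by simp_all
  then show ?thesis
    using lower upper unfolding barycentre_def by simp
qed

end
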